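(* Let $n$ be even and let $G=D_n$ be the dihedral group of order $2n$. Let $H\le G$ be a subgroup isomorphic to a dihedral group, of index $2$ in $G$, and whose order is divisible by $4$. Then the restriction map $\operatorname{Res}:H^3(G,\mathbb{Z})\to H^3(H,\mathbb{Z})$ is injective.
   Context: $D_n=\langle r,s\mid r^n=s^2=e,\ srs=r^{-1}\rangle$. $\mathbb{Z}$ is the trivial $G$-module. *)

theory Defs
  imports "HOL-Algebra.Algebra"
begin

text \<open>Concrete model of the dihedral group D_n of order 2n:
  the pair (a, b) stands for r^a s^b with 0 <= a < n, where b = True means the factor s is present.
  Using s r^c = r^(-c) s we get (r^a s^b)(r^c s^d) = r^(a + (if b then -c else c)) s^(b+d).\<close>
definition dihedral_group :: "nat \<Rightarrow> (nat \<times> bool) monoid" where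
  "dihedral_group n =
     \<lparr> carrier = {0..<n} \<times> (UNIV :: bool set),
       monoid.mult = (\<lambda>(a, b) (c, d). ((if b then a + n - c else a + c) mod n, b \<noteq> d)),
       monoid.one = (0, False) \<rparr>"

text \<open>Inhomogeneous (bar-resolution) cochains of G with values in the trivial module Z:
  a k-cochain is a function on lists of length k of elements of carrier G.\<close>
definition cobdry :: "('a, 'b) monoid_scheme \<Rightarrow> nat \<Rightarrow> ('a list \<Rightarrow> int) \<Rightarrow> 'a list \<Rightarrow> int" where
  "cobdry G k f xs =
     f (tl xs)
     + (\<Sum>i\<in>{1..k}. (-1) ^ i * f (take (i - 1) xs @ [xs ! (i - 1) \<otimes>\<^bsub>G\<^esub> xs ! i] @ drop (i + 1) xs))
     + (-1) ^ (k + 1) * f (take k xs)"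

definition cocycle :: "('a, 'b) monoid_scheme \<Rightarrow> nat \<Rightarrow> ('a list \<Rightarrow> int) \<Rightarrow> bool" where
  "cocycle G k f \<longleftrightarrow>
     (\<forall>xs. set xs \<subseteq> carrier G \<and> length xs = Suc k \<longrightarrow> cobdry G k f xs = 0)"

definition is_coboundary :: "('a, 'b) monoid_scheme \<Rightarrow> nat \<Rightarrow> ('a list \<Rightarrow> int) \<Rightarrow> bool" where
  "is_coboundary G k f \<longleftrightarrow>
     (\<exists>h. \<forall>xs. set xs \<subseteq> carrier G \<and> length xs = Suc k \<longrightarrow> f xs = cobdry G k h xs)"

text \<open>Two (k+1)-cochains represent the same class in H^(k+1)(G,Z).\<close>
definition cohomologous :: "('a, 'b) monoid_scheme \<Rightarrow> nat \<Rightarrow> ('a list \<Rightarrow> int) \<Rightarrow> ('a list \<Rightarrow> int) \<Rightarrow> bool" where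
  "cohomologous G k f g \<longleftrightarrow> is_coboundary G k (\<lambda>xs. f xs - g xs)"

end

theory Submission
  imports Defs
begin

text \<open>Let \<phi> = f - g. Averaging over the last argument writes \<phi> = d\<theta> with \<theta> rational, so
  \<theta> mod Z is a Q/Z-valued 2-cocycle, i.e. a central extension E of D_n by Q/Z, and \<phi> is an
  integral coboundary as soon as E splits. As Q/Z is divisible, r and s have lifts R and S with
  R^n = S^2 = 1; writing (S R)^2 = \<gamma>, the obstruction to correcting R so that also (S R)^2 = 1
  is (n/2) \<gamma> mod Z, and it vanishes once R^(n/2) commutes with S. An index-two subgroup H with
  4 dividing |H| contains the central rotation r^(n/2) and a reflection commuting with it; since
  \<phi> restricted to H is a coboundary d k, the rational 2-cocycle \<theta> - k of H is symmetric on
  this commuting pair, which is exactly what makes the two lifts commute.\<close>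

lemma dihedral_group_mult:
  "(a, b) \<otimes>\<^bsub>dihedral_group n\<^esub> (c, d) = ((if b then a + n - c else a + c) mod n, b \<noteq> d)"
  by (simp add: dihedral_group_def)

lemma carrier_dihedral_group: "carrier (dihedral_group n) = {0..<n} \<times> UNIV"
  by (simp add: dihedral_group_def)

lemma one_dihedral_group: "\<one>\<^bsub>dihedral_group n\<^esub> = (0, False)"
  by (simp add: dihedral_group_def)

lemma int_fst_dihedral_group_mult:
  assumes "c < n"
  shows "int (fst ((a, b) \<otimes>\<^bsub>dihedral_group n\<^esub> (c, d)))
           = (if b then int a - int c else int a + int c) mod int n"
proof -
  have "int ((a + n - c) mod n) = (int a + int n - int c) mod int n"
    using assms by (simp add: zmod_int of_nat_diff)
  also have "\<dots> = (int a - int c) mod int n"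
    by (metis add.commute add_diff_eq mod_add_self1)
  finally show ?thesis by (simp add: dihedral_group_mult zmod_int)
qed

lemma group_dihedral_group:
  assumes "n > 0"
  shows "group (dihedral_group n)"
proof (rule groupI)
  let ?D = "dihedral_group n"
  show "x \<otimes>\<^bsub>?D\<^esub> y \<in> carrier ?D" if "x \<in> carrier ?D" "y \<in> carrier ?D" for x y
    using that assms by (auto simp: dihedral_group_mult carrier_dihedral_group)
  show "\<one>\<^bsub>?D\<^esub> \<in> carrier ?D"
    using assms by (simp add: one_dihedral_group carrier_dihedral_group)
  show "\<one>\<^bsub>?D\<^esub> \<otimes>\<^bsub>?D\<^esub> x = x" if "x \<in> carrier ?D" for x
    using that by (auto simp: dihedral_group_mult carrier_dihedral_group one_dihedral_group)
  show "\<exists>y\<in>carrier ?D. y \<otimes>\<^bsub>?D\<^esub> x = \<one>\<^bsub>?D\<^esub>" if x_in: "x \<in> carrier ?D" for x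
  proof -
    obtain a b where x: "x = (a, b)" "a < n"
      using x_in by (cases x) (auto simp: carrier_dihedral_group)
    show ?thesis
    proof (cases b)
      case True
      with x show ?thesis
        by (intro bexI[of _ "(a, True)"])
           (auto simp: dihedral_group_mult one_dihedral_group carrier_dihedral_group)
    next
      case False
      with x assms show ?thesis
        by (intro bexI[of _ "((n - a) mod n, False)"])
           (auto simp: dihedral_group_mult one_dihedral_group carrier_dihedral_group mod_add_left_eq)
    qed
  qed
  show "(x \<otimes>\<^bsub>?D\<^esub> y) \<otimes>\<^bsub>?D\<^esub> z = x \<otimes>\<^bsub>?D\<^esub> (y \<otimes>\<^bsub>?D\<^esub> z)"
    if xyz_in: "x \<in> carrier ?D" "y \<in> carrier ?D" "z \<in> carrier ?D" for x y z
  proof -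
    obtain a b c d e f where xyz: "x = (a, b)" "y = (c, d)" "z = (e, f)" "c < n" "e < n"
      using xyz_in by (cases x; cases y; cases z) (auto simp: carrier_dihedral_group)
    let ?p = "(a, b) \<otimes>\<^bsub>?D\<^esub> (c, d)" and ?q = "(c, d) \<otimes>\<^bsub>?D\<^esub> (e, f)"
    have p: "?p = (fst ?p, b \<noteq> d)" and q: "?q = (fst ?q, d \<noteq> f)"
      by (simp_all add: dihedral_group_mult)
    have "fst ?q < n"
      using assms by (simp add: dihedral_group_mult)
    have "int (fst (?p \<otimes>\<^bsub>?D\<^esub> (e, f)))
            = (if b \<noteq> d then int (fst ?p) - int e else int (fst ?p) + int e) mod int n"
      by (subst p) (rule int_fst_dihedral_group_mult[OF \<open>e < n\<close>])
    also have "\<dots> = (if b then int a - int (fst ?q) else int a + int (fst ?q)) mod int n"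
      unfolding int_fst_dihedral_group_mult[OF \<open>c < n\<close>] int_fst_dihedral_group_mult[OF \<open>e < n\<close>]
      by (cases b; cases d; simp add: mod_simps algebra_simps)
    also have "\<dots> = int (fst ((a, b) \<otimes>\<^bsub>?D\<^esub> ?q))"
      by (subst q) (rule int_fst_dihedral_group_mult[OF \<open>fst ?q < n\<close>, symmetric])
    finally have "fst (?p \<otimes>\<^bsub>?D\<^esub> (e, f)) = fst ((a, b) \<otimes>\<^bsub>?D\<^esub> ?q)"
      by simp
    moreover have "snd (?p \<otimes>\<^bsub>?D\<^esub> (e, f)) = snd ((a, b) \<otimes>\<^bsub>?D\<^esub> ?q)"
      by (simp add: dihedral_group_mult) blast
    ultimately show ?thesis
      unfolding xyz by (simp add: prod_eq_iff)
  qed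
qed

lemma dihedral_group_rotation_pow:
  assumes "n > 1"
  shows "(Suc 0, False) [^]\<^bsub>dihedral_group n\<^esub> (k::nat) = (k mod n, False)"
proof (induction k)
  case 0
  then show ?case by (simp add: one_dihedral_group)
next
  case (Suc k)
  then show ?case by (simp add: dihedral_group_mult mod_Suc_eq)
qed

lemma cobdry_2:
  "cobdry G 2 f [x, y, z] = f [y, z] - f [x \<otimes>\<^bsub>G\<^esub> y, z] + f [x, y \<otimes>\<^bsub>G\<^esub> z] - f [x, y]"
  by (simp add: cobdry_def numeral_2_eq_2)

lemma cobdry_3:
  "cobdry G 3 f [w, x, y, z]
     = f [x, y, z] - f [w \<otimes>\<^bsub>G\<^esub> x, y, z] + f [w, x \<otimes>\<^bsub>G\<^esub> y, z]
       - f [w, x, y \<otimes>\<^bsub>G\<^esub> z] + f [w, x, y]"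
  by (simp add: cobdry_def numeral_3_eq_3)

lemma cobdry_diff:
  "cobdry G k (\<lambda>xs. f xs - g xs) xs = cobdry G k f xs - cobdry G k g xs"
  by (simp add: cobdry_def sum_subtractf algebra_simps)

lemma cocycle_diff:
  "cocycle G k f \<Longrightarrow> cocycle G k g \<Longrightarrow> cocycle G k (\<lambda>xs. f xs - g xs)"
  by (simp add: cocycle_def cobdry_diff)

lemma (in group) sum_left_translate:
  "a \<in> carrier G \<Longrightarrow> (\<Sum>g\<in>carrier G. F (a \<otimes> g)) = (\<Sum>g\<in>carrier G. F g)"
  using sum.reindex[OF inj_on_cmult, of a F] by (simp add: surj_const_mult)

lemma (in group) nat_pow_mod:
  assumes "x \<in> carrier G" "x [^] (n::nat) = \<one>"
  shows "x [^] k = x [^] (k mod n)"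
proof -
  have "x [^] k = (x [^] n) [^] (k div n) \<otimes> x [^] (k mod n)"
    using assms(1) by (simp add: nat_pow_pow nat_pow_mult)
  with assms show ?thesis by simp
qed

lemma (in group) involution_conj_pow:
  assumes "s \<in> carrier G" "x \<in> carrier G" "s \<otimes> s = \<one>"
  shows "s \<otimes> x [^] (k::nat) \<otimes> s = (s \<otimes> x \<otimes> s) [^] k"
proof (induction k)
  case 0
  then show ?case using assms by simp
next
  case (Suc k)
  have s_s_y: "s \<otimes> (s \<otimes> y) = y" if "y \<in> carrier G" for y
    using assms that by (simp flip: m_assoc)
  have "(s \<otimes> x [^] k \<otimes> s) \<otimes> (s \<otimes> x \<otimes> s) = s \<otimes> x [^] k \<otimes> (s \<otimes> s) \<otimes> x \<otimes> s"
    using assms by (simp add: m_assoc s_s_y)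
  then have "s \<otimes> x [^] Suc k \<otimes> s = (s \<otimes> x [^] k \<otimes> s) \<otimes> (s \<otimes> x \<otimes> s)"
    using assms by (simp add: m_assoc)
  with Suc show ?case by simp
qed

definition avg_cochain :: "('a, 'b) monoid_scheme \<Rightarrow> ('a list \<Rightarrow> int) \<Rightarrow> 'a list \<Rightarrow> rat" where
  "avg_cochain G \<phi> xs = - (\<Sum>g\<in>carrier G. of_int (\<phi> (xs @ [g]))) / of_nat (card (carrier G))"

lemma cobdry_avg_cochain:
  fixes G (structure)
  assumes "group G" "finite (carrier G)" "cocycle G 3 \<phi>"
    and x: "x \<in> carrier G" and y: "y \<in> carrier G" and z: "z \<in> carrier G"
  shows "avg_cochain G \<phi> [y, z] - avg_cochain G \<phi> [x \<otimes> y, z] + avg_cochain G \<phi> [x, y \<otimes> z]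
           - avg_cochain G \<phi> [x, y] = of_int (\<phi> [x, y, z])"
proof -
  interpret group G by fact
  let ?N = "of_nat (card (carrier G)) :: rat"
  have "?N \<noteq> 0"
    using assms(2) one_closed by (auto simp: card_eq_0_iff)
  define S where "S xs = (\<Sum>g\<in>carrier G. (of_int (\<phi> (xs @ [g])) :: rat))" for xs
  have "cobdry G 3 \<phi> [x, y, z, g] = 0" if "g \<in> carrier G" for g
    using assms(3) x y z that by (simp add: cocycle_def)
  then have "(\<Sum>g\<in>carrier G. (of_int (\<phi> [y, z, g] - \<phi> [x \<otimes> y, z, g] + \<phi> [x, y \<otimes> z, g]
               - \<phi> [x, y, z \<otimes> g] + \<phi> [x, y, z]) :: rat)) = 0"
    by (intro sum.neutral) (simp add: cobdry_3)
  then have "S [y, z] - S [x \<otimes> y, z] + S [x, y \<otimes> z] - (\<Sum>g\<in>carrier G. of_int (\<phi> [x, y, z \<otimes> g]))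
               + ?N * of_int (\<phi> [x, y, z]) = 0"
    by (simp add: S_def sum.distrib sum_subtractf)
  moreover have "(\<Sum>g\<in>carrier G. (of_int (\<phi> [x, y, z \<otimes> g]) :: rat)) = S [x, y]"
    unfolding S_def using sum_left_translate[OF z, of "\<lambda>g. of_int (\<phi> [x, y, g])"] by simp
  ultimately have "S [y, z] - S [x \<otimes> y, z] + S [x, y \<otimes> z] - S [x, y] = - ?N * of_int (\<phi> [x, y, z])"
    by simp
  moreover have avg: "?N * avg_cochain G \<phi> xs = - S xs" for xs
    using \<open>?N \<noteq> 0\<close> by (simp add: avg_cochain_def S_def)
  ultimately have "?N * (avg_cochain G \<phi> [y, z] - avg_cochain G \<phi> [x \<otimes> y, z]
      + avg_cochain G \<phi> [x, y \<otimes> z] - avg_cochain G \<phi> [x, y]) = ?N * of_int (\<phi> [x, y, z])"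
    unfolding right_diff_distrib distrib_left avg by linarith
  with \<open>?N \<noteq> 0\<close> show ?thesis by simp
qed

text \<open>Summing the cocycle identity over z shows that |G| c [x,y] = \<mu> x + \<mu> y - \<mu> (x \<otimes> y)
  with \<mu> x the sum of c [x,g] over g, which is symmetric in commuting x and y.\<close>
lemma rat_2cocycle_sym_if_commute:
  fixes G (structure) and c :: "'a list \<Rightarrow> rat"
  assumes "group G" "finite (carrier G)"
    and cocycle: "\<And>x y z. x \<in> carrier G \<Longrightarrow> y \<in> carrier G \<Longrightarrow> z \<in> carrier G \<Longrightarrow>
                    c [y, z] - c [x \<otimes> y, z] + c [x, y \<otimes> z] - c [x, y] = 0"
    and a: "a \<in> carrier G" and b: "b \<in> carrier G" and commute: "a \<otimes> b = b \<otimes> a"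
  shows "c [a, b] = c [b, a]"
proof -
  interpret group G by fact
  let ?N = "of_nat (card (carrier G)) :: rat"
  have "?N \<noteq> 0"
    using assms(2) one_closed by (auto simp: card_eq_0_iff)
  define \<mu> where "\<mu> x = (\<Sum>g\<in>carrier G. c [x, g])" for x
  have \<mu>: "\<mu> y - \<mu> (x \<otimes> y) + \<mu> x = ?N * c [x, y]" if "x \<in> carrier G" "y \<in> carrier G" for x y
  proof -
    have "(\<Sum>g\<in>carrier G. c [y, g] - c [x \<otimes> y, g] + c [x, y \<otimes> g] - c [x, y]) = 0"
      using cocycle that by (intro sum.neutral) simp
    then have "\<mu> y - \<mu> (x \<otimes> y) + (\<Sum>g\<in>carrier G. c [x, y \<otimes> g]) - ?N * c [x, y] = 0"
      by (simp add: \<mu>_def sum.distrib sum_subtractf)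
    moreover have "(\<Sum>g\<in>carrier G. c [x, y \<otimes> g]) = \<mu> x"
      unfolding \<mu>_def using sum_left_translate[OF that(2), of "\<lambda>g. c [x, g]"] by simp
    ultimately show ?thesis by simp
  qed
  have "?N * c [a, b] = ?N * c [b, a]"
    using \<mu>[OF a b] \<mu>[OF b a] unfolding commute by linarith
  with \<open>?N \<noteq> 0\<close> show ?thesis by simp
qed

lemma rat_cobdry_commutator_Ints:
  fixes G (structure) and \<theta> :: "'a list \<Rightarrow> rat"
  assumes "group G" "finite (carrier G)"
    and cobdry_\<theta>: "\<And>x y z. x \<in> carrier G \<Longrightarrow> y \<in> carrier G \<Longrightarrow> z \<in> carrier G \<Longrightarrow>
                      \<theta> [y, z] - \<theta> [x \<otimes> y, z] + \<theta> [x, y \<otimes> z] - \<theta> [x, y] = of_int (\<phi> [x, y, z])"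
    and "is_coboundary G 2 \<phi>"
    and "a \<in> carrier G" "b \<in> carrier G" "a \<otimes> b = b \<otimes> a"
  shows "\<theta> [a, b] - \<theta> [b, a] \<in> \<int>"
proof -
  obtain k where k: "\<And>xs. set xs \<subseteq> carrier G \<Longrightarrow> length xs = 3 \<Longrightarrow> \<phi> xs = cobdry G 2 k xs"
    using assms(4) by (auto simp: is_coboundary_def numeral_3_eq_3)
  have "\<theta> [a, b] - of_int (k [a, b]) = \<theta> [b, a] - of_int (k [b, a])"
  proof (rule rat_2cocycle_sym_if_commute[OF assms(1,2) _ assms(5-7)])
    fix x y z assume xyz: "x \<in> carrier G" "y \<in> carrier G" "z \<in> carrier G"
    then have "\<phi> [x, y, z] = k [y, z] - k [x \<otimes> y, z] + k [x, y \<otimes> z] - k [x, y]"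
      using k[of "[x, y, z]"] by (simp add: cobdry_2)
    then show "\<theta> [y, z] - of_int (k [y, z]) - (\<theta> [x \<otimes> y, z] - of_int (k [x \<otimes> y, z]))
                 + (\<theta> [x, y \<otimes> z] - of_int (k [x, y \<otimes> z])) - (\<theta> [x, y] - of_int (k [x, y])) = 0"
      using cobdry_\<theta>[OF xyz] by simp
  qed
  then have "\<theta> [a, b] - \<theta> [b, a] = of_int (k [a, b] - k [b, a])"
    by simp
  then show ?thesis by simp
qed

definition qz_coboundary :: "('a, 'b) monoid_scheme \<Rightarrow> ('a \<Rightarrow> 'a \<Rightarrow> rat) \<Rightarrow> bool" where
  "qz_coboundary G t \<longleftrightarrow>
     (\<exists>\<eta>. \<forall>x\<in>carrier G. \<forall>y\<in>carrier G. \<eta> x + \<eta> y + t x y - \<eta> (x \<otimes>\<^bsub>G\<^esub> y) \<in> \<int>)"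

lemma is_coboundary_if_qz_coboundary:
  fixes G (structure) and \<theta> :: "'a list \<Rightarrow> rat"
  assumes "monoid G"
    and cobdry_\<theta>: "\<And>x y z. x \<in> carrier G \<Longrightarrow> y \<in> carrier G \<Longrightarrow> z \<in> carrier G \<Longrightarrow>
                      \<theta> [y, z] - \<theta> [x \<otimes> y, z] + \<theta> [x, y \<otimes> z] - \<theta> [x, y] = of_int (\<phi> [x, y, z])"
    and "qz_coboundary G (\<lambda>x y. \<theta> [x, y] - c)"
  shows "is_coboundary G 2 \<phi>"
proof -
  interpret monoid G by fact
  obtain \<eta> where \<eta>: "\<And>x y. x \<in> carrier G \<Longrightarrow> y \<in> carrier G \<Longrightarrow>
                       \<eta> x + \<eta> y + (\<theta> [x, y] - c) - \<eta> (x \<otimes> y) \<in> \<int>"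
    using assms(3) by (auto simp: qz_coboundary_def)
  define h where "h xs = \<lfloor>\<eta> (xs ! 0) + \<eta> (xs ! 1) + (\<theta> xs - c) - \<eta> (xs ! 0 \<otimes> xs ! 1)\<rfloor>" for xs
  have h: "of_int (h [x, y]) = \<eta> x + \<eta> y + (\<theta> [x, y] - c) - \<eta> (x \<otimes> y)"
    if "x \<in> carrier G" "y \<in> carrier G" for x y
    using \<eta>[OF that] by (simp add: h_def)
  have "\<phi> [x, y, z] = cobdry G 2 h [x, y, z]"
    if "x \<in> carrier G" "y \<in> carrier G" "z \<in> carrier G" for x y z
  proof -
    have "(of_int (cobdry G 2 h [x, y, z]) :: rat)
            = \<theta> [y, z] - \<theta> [x \<otimes> y, z] + \<theta> [x, y \<otimes> z] - \<theta> [x, y]"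
      using that by (simp add: cobdry_2 h m_assoc)
    with cobdry_\<theta>[OF that] show ?thesis by simp
  qed
  then show ?thesis
    by (auto simp: is_coboundary_def length_Suc_conv numeral_2_eq_2)
qed

lemma frac_eq_if_diff_in_Ints: "a - b \<in> \<int> \<Longrightarrow> frac a = frac (b :: 'a :: floor_ceiling)"
  using frac_add_int_left[of "a - b" b] by simp

text \<open>A Q/Z-valued 2-cocycle is given by rational representatives t, all identities holding
  modulo Z. Q/Z is realised as [0,1) with addition modulo 1 (via frac), and E is the central
  extension of G by Q/Z defined by t.\<close>
locale qz_cocycle = group G for G (structure) +
  fixes t :: "'a \<Rightarrow> 'a \<Rightarrow> rat"
  assumes t_one_one: "t \<one> \<one> \<in> \<int>"
    and t_cocycle: "\<And>x y z. x \<in> carrier G \<Longrightarrow> y \<in> carrier G \<Longrightarrow> z \<in> carrier G \<Longrightarrow>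
                      t x y + t (x \<otimes> y) z - t y z - t x (y \<otimes> z) \<in> \<int>"
begin

lemma t_one_left: "y \<in> carrier G \<Longrightarrow> t \<one> y \<in> \<int>"
  using t_cocycle[of \<one> \<one> y] t_one_one Ints_diff by fastforce

lemma t_one_right: "x \<in> carrier G \<Longrightarrow> t x \<one> \<in> \<int>"
  using t_cocycle[of x \<one> \<one>] t_one_left[of \<one>] Ints_diff by fastforce

definition E :: "(rat \<times> 'a) monoid" where
  "E = \<lparr> carrier = {0..<1} \<times> carrier G,
        monoid.mult = (\<lambda>(p, x) (q, y). (frac (p + q + t x y), x \<otimes> y)),
        monoid.one = (0, \<one>) \<rparr>"

definition central :: "rat \<Rightarrow> rat \<times> 'a" where
  "central q = (frac q, \<one>)"

lemma carrier_E: "carrier E = {0..<1} \<times> carrier G"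
  by (simp add: E_def)

lemma one_E: "\<one>\<^bsub>E\<^esub> = (0, \<one>)"
  by (simp add: E_def)

lemma mult_E: "u \<otimes>\<^bsub>E\<^esub> v = (frac (fst u + fst v + t (snd u) (snd v)), snd u \<otimes> snd v)"
  by (simp add: E_def case_prod_beta)

lemma group_E: "group E"
proof (rule groupI)
  show "u \<otimes>\<^bsub>E\<^esub> v \<in> carrier E" if "u \<in> carrier E" "v \<in> carrier E" for u v
    using that by (auto simp: carrier_E mult_E frac_lt_1)
  show "\<one>\<^bsub>E\<^esub> \<in> carrier E"
    by (simp add: carrier_E one_E)
  show "\<one>\<^bsub>E\<^esub> \<otimes>\<^bsub>E\<^esub> u = u" if "u \<in> carrier E" for u
    using that t_one_left[of "snd u"] by (auto simp: carrier_E one_E mult_E frac_add_int_right)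
  show "(u \<otimes>\<^bsub>E\<^esub> v) \<otimes>\<^bsub>E\<^esub> w = u \<otimes>\<^bsub>E\<^esub> (v \<otimes>\<^bsub>E\<^esub> w)"
    if uvw_in: "u \<in> carrier E" "v \<in> carrier E" "w \<in> carrier E" for u v w
  proof -
    obtain p x q y r z where uvw: "u = (p, x)" "v = (q, y)" "w = (r, z)"
      and xyz: "x \<in> carrier G" "y \<in> carrier G" "z \<in> carrier G"
      using uvw_in by (cases u; cases v; cases w) (auto simp: carrier_E)
    have "frac (frac (p + q + t x y) + r + t (x \<otimes> y) z) = frac (p + frac (q + r + t y z) + t x (y \<otimes> z))"
      (is "frac ?lhs = frac ?rhs")
    proof (rule frac_eq_if_diff_in_Ints)
      have "?lhs - ?rhs = (t x y + t (x \<otimes> y) z - t y z - t x (y \<otimes> z))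
                          - of_int \<lfloor>p + q + t x y\<rfloor> + of_int \<lfloor>q + r + t y z\<rfloor>"
        by (simp add: frac_def)
      with t_cocycle[OF xyz] show "?lhs - ?rhs \<in> \<int>"
        by (metis Ints_add Ints_diff Ints_of_int)
    qed
    then show ?thesis
      using xyz by (simp add: uvw mult_E m_assoc)
  qed
  show "\<exists>v\<in>carrier E. v \<otimes>\<^bsub>E\<^esub> u = \<one>\<^bsub>E\<^esub>" if "u \<in> carrier E" for u
  proof
    let ?v = "(frac (- fst u - t (inv (snd u)) (snd u)), inv (snd u))"
    show "?v \<in> carrier E"
      using that by (auto simp: carrier_E frac_lt_1)
    show "?v \<otimes>\<^bsub>E\<^esub> u = \<one>\<^bsub>E\<^esub>"
      using that by (auto simp: carrier_E mult_E one_E frac_def)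
  qed
qed

end

sublocale qz_cocycle \<subseteq> E: group E
  by (rule group_E)

context qz_cocycle
begin

lemma snd_mult_E: "snd (u \<otimes>\<^bsub>E\<^esub> v) = snd u \<otimes> snd v"
  by (simp add: mult_E)

lemma snd_pow_E: "u \<in> carrier E \<Longrightarrow> snd (u [^]\<^bsub>E\<^esub> (k::nat)) = snd u [^] k"
  by (induction k) (simp_all add: one_E snd_mult_E)

lemma central_closed [simp]: "central q \<in> carrier E"
  by (simp add: central_def carrier_E frac_lt_1)

lemma central_mult: "central p \<otimes>\<^bsub>E\<^esub> central q = central (p + q)"
  using t_one_one by (simp add: central_def mult_E frac_add_int_right)

lemma central_eq_one_iff: "central q = \<one>\<^bsub>E\<^esub> \<longleftrightarrow> q \<in> \<int>"
  by (simp add: central_def one_E)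

lemma central_mult_left: "u \<in> carrier E \<Longrightarrow> central q \<otimes>\<^bsub>E\<^esub> u = (frac (q + fst u), snd u)"
  using t_one_left[of "snd u"] by (auto simp: central_def mult_E carrier_E frac_add_int_right)

lemma mult_central_right: "u \<in> carrier E \<Longrightarrow> u \<otimes>\<^bsub>E\<^esub> central q = (frac (fst u + q), snd u)"
  using t_one_right[of "snd u"] by (auto simp: central_def mult_E carrier_E frac_add_int_right)

lemma central_commute: "u \<in> carrier E \<Longrightarrow> central q \<otimes>\<^bsub>E\<^esub> u = u \<otimes>\<^bsub>E\<^esub> central q"
  by (simp add: central_mult_left mult_central_right add.commute)

lemma central_zero [simp]: "central 0 = \<one>\<^bsub>E\<^esub>"
  by (simp add: central_def one_E)

lemma central_pow: "central q [^]\<^bsub>E\<^esub> (k::nat) = central (of_nat k * q)"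
proof (induction k)
  case 0
  then show ?case by simp
next
  case (Suc k)
  then show ?case by (simp add: central_mult algebra_simps)
qed

lemma eq_mult_central_if_snd_eq:
  "u \<in> carrier E \<Longrightarrow> v \<in> carrier E \<Longrightarrow> snd u = snd v \<Longrightarrow> u = v \<otimes>\<^bsub>E\<^esub> central (fst u - fst v)"
  by (auto simp: mult_central_right carrier_E prod_eq_iff)

lemma eq_central_if_snd_eq_one: "u \<in> carrier E \<Longrightarrow> snd u = \<one> \<Longrightarrow> u = central (fst u)"
  by (auto simp: central_def carrier_E prod_eq_iff)

lemma mult_central_mult_central:
  assumes "u \<in> carrier E" "v \<in> carrier E"
  shows "(u \<otimes>\<^bsub>E\<^esub> central p) \<otimes>\<^bsub>E\<^esub> (v \<otimes>\<^bsub>E\<^esub> central q) = (u \<otimes>\<^bsub>E\<^esub> v) \<otimes>\<^bsub>E\<^esub> central (p + q)"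
proof -
  have "(u \<otimes>\<^bsub>E\<^esub> central p) \<otimes>\<^bsub>E\<^esub> (v \<otimes>\<^bsub>E\<^esub> central q) = u \<otimes>\<^bsub>E\<^esub> (central p \<otimes>\<^bsub>E\<^esub> v) \<otimes>\<^bsub>E\<^esub> central q"
    using assms by (simp add: E.m_assoc)
  also have "\<dots> = (u \<otimes>\<^bsub>E\<^esub> v) \<otimes>\<^bsub>E\<^esub> (central p \<otimes>\<^bsub>E\<^esub> central q)"
    using assms central_commute[OF assms(2), of p] by (simp add: E.m_assoc)
  finally show ?thesis by (simp add: central_mult)
qed

lemma pow_mult_central:
  "u \<in> carrier E \<Longrightarrow> (u \<otimes>\<^bsub>E\<^esub> central q) [^]\<^bsub>E\<^esub> (k::nat) = u [^]\<^bsub>E\<^esub> k \<otimes>\<^bsub>E\<^esub> central (of_nat k * q)"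
  using central_commute[of u q] by (simp add: E.pow_mult_distrib central_pow)

lemma snd_mult_central: "u \<in> carrier E \<Longrightarrow> snd (u \<otimes>\<^bsub>E\<^esub> central q) = snd u"
  by (simp add: mult_central_right)

lemma mult_E_commute:
  assumes "u \<in> carrier E" "v \<in> carrier E" "snd u \<otimes> snd v = snd v \<otimes> snd u"
    and "t (snd u) (snd v) - t (snd v) (snd u) \<in> \<int>"
  shows "u \<otimes>\<^bsub>E\<^esub> v = v \<otimes>\<^bsub>E\<^esub> u"
proof -
  have "frac (fst u + fst v + t (snd u) (snd v)) = frac (fst v + fst u + t (snd v) (snd u))"
    using assms(4) by (intro frac_eq_if_diff_in_Ints) (simp add: algebra_simps)
  with assms(3) show ?thesis by (simp add: mult_E)
qed

text \<open>Q/Z is divisible, so a central correction kills the k-th power of any lift.\<close>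
lemma lift_pow_eq_one:
  assumes "x \<in> carrier G" "x [^] (k::nat) = \<one>" "k > 0"
  obtains u where "u \<in> carrier E" "snd u = x" "u [^]\<^bsub>E\<^esub> k = \<one>\<^bsub>E\<^esub>"
proof
  let ?u0 = "(0::rat, x)"
  have u0: "?u0 \<in> carrier E" using assms(1) by (simp add: carrier_E)
  define \<alpha> where "\<alpha> = fst (?u0 [^]\<^bsub>E\<^esub> k)"
  have "?u0 [^]\<^bsub>E\<^esub> k = central \<alpha>"
    unfolding \<alpha>_def using u0 assms(2) by (intro eq_central_if_snd_eq_one) (simp_all add: snd_pow_E)
  then show "(?u0 \<otimes>\<^bsub>E\<^esub> central (- \<alpha> / of_nat k)) [^]\<^bsub>E\<^esub> k = \<one>\<^bsub>E\<^esub>"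
    using u0 assms(3) by (simp add: pow_mult_central central_mult central_eq_one_iff)
  show "?u0 \<otimes>\<^bsub>E\<^esub> central (- \<alpha> / of_nat k) \<in> carrier E" "snd (?u0 \<otimes>\<^bsub>E\<^esub> central (- \<alpha> / of_nat k)) = x"
    using u0 by (simp_all add: snd_mult_central)
qed

text \<open>Conjugation by S inverts R up to the central factor \<gamma>, so it sends R^m to
  (m \<gamma>) R^(-m); if R^m commutes with S this forces R^(2m) = (m \<gamma>).\<close>
lemma half_pow_commute_obstruction:
  assumes R: "R \<in> carrier E" "R [^]\<^bsub>E\<^esub> (m + m) = \<one>\<^bsub>E\<^esub>"
    and S: "S \<in> carrier E" "S \<otimes>\<^bsub>E\<^esub> S = \<one>\<^bsub>E\<^esub>"
    and SRSR: "S \<otimes>\<^bsub>E\<^esub> R \<otimes>\<^bsub>E\<^esub> S \<otimes>\<^bsub>E\<^esub> R = central \<gamma>"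
    and commute: "R [^]\<^bsub>E\<^esub> m \<otimes>\<^bsub>E\<^esub> S = S \<otimes>\<^bsub>E\<^esub> R [^]\<^bsub>E\<^esub> m"
  shows "of_nat m * \<gamma> \<in> \<int>"
proof -
  define U where "U = R [^]\<^bsub>E\<^esub> m"
  have U: "U \<in> carrier E"
    using R by (simp add: U_def)
  have "S \<otimes>\<^bsub>E\<^esub> R \<otimes>\<^bsub>E\<^esub> S = central \<gamma> \<otimes>\<^bsub>E\<^esub> inv\<^bsub>E\<^esub> R"
    using S R SRSR by (metis E.inv_solve_right E.inv_closed E.m_closed central_closed)
  then have "S \<otimes>\<^bsub>E\<^esub> U \<otimes>\<^bsub>E\<^esub> S = central (of_nat m * \<gamma>) \<otimes>\<^bsub>E\<^esub> inv\<^bsub>E\<^esub> U"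
    using E.involution_conj_pow[OF S(1) R(1) S(2), of m] R central_commute[of "inv\<^bsub>E\<^esub> R" \<gamma>]
      central_commute[of "inv\<^bsub>E\<^esub> U" "of_nat m * \<gamma>"]
    by (simp add: U_def E.pow_mult_distrib central_pow E.nat_pow_inv)
  moreover have "S \<otimes>\<^bsub>E\<^esub> U \<otimes>\<^bsub>E\<^esub> S = U"
    using commute S U by (metis E.m_assoc E.r_one U_def)
  moreover have "U \<otimes>\<^bsub>E\<^esub> U = \<one>\<^bsub>E\<^esub>"
    using R by (simp add: U_def E.nat_pow_mult)
  ultimately have "central (of_nat m * \<gamma>) = \<one>\<^bsub>E\<^esub>"
    using U by (metis E.inv_closed E.inv_equality E.inv_inv E.m_assoc E.r_inv E.r_one central_closed)
  then show ?thesis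
    by (simp add: central_eq_one_iff)
qed

lemma qz_coboundary_if_hom_section:
  assumes "\<sigma> \<in> hom G E"
    and "\<And>x. x \<in> carrier G \<Longrightarrow> snd (\<sigma> x) = x"
  shows "qz_coboundary G t"
  unfolding qz_coboundary_def
proof (intro exI ballI)
  fix x y assume "x \<in> carrier G" "y \<in> carrier G"
  with assms have "fst (\<sigma> (x \<otimes> y)) = frac (fst (\<sigma> x) + fst (\<sigma> y) + t x y)"
    by (simp add: hom_mult mult_E)
  then show "fst (\<sigma> x) + fst (\<sigma> y) + t x y - fst (\<sigma> (x \<otimes> y)) \<in> \<int>"
    by (simp add: frac_def)
qed

end

definition dihedral_map :: "('a, 'b) monoid_scheme \<Rightarrow> 'a \<Rightarrow> 'a \<Rightarrow> nat \<times> bool \<Rightarrow> 'a" where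
  "dihedral_map G r s = (\<lambda>(a, b). if b then r [^]\<^bsub>G\<^esub> a \<otimes>\<^bsub>G\<^esub> s else r [^]\<^bsub>G\<^esub> a)"

lemma (in group) dihedral_map_hom:
  assumes r: "r \<in> carrier G" and s: "s \<in> carrier G"
    and r_pow: "r [^] n = \<one>" and s_s: "s \<otimes> s = \<one>" and srsr: "s \<otimes> r \<otimes> s \<otimes> r = \<one>"
  shows "dihedral_map G r s \<in> hom (dihedral_group n) G"
proof (rule homI)
  show "dihedral_map G r s x \<in> carrier G" for x
    using r s by (cases x) (simp add: dihedral_map_def)
  fix x y assume "x \<in> carrier (dihedral_group n)" "y \<in> carrier (dihedral_group n)"
  then obtain a b c d where xy: "x = (a, b)" "y = (c, d)" "c < n"
    by (cases x; cases y) (auto simp: carrier_dihedral_group)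
  have r_pow_mod: "r [^] k = r [^] (k mod n)" for k
    by (rule nat_pow_mod[OF r r_pow])
  have "s \<otimes> r \<otimes> s = inv r"
    using r s srsr by (intro inv_equality[symmetric]) (simp_all add: m_assoc)
  moreover have "inv (r [^] c) = r [^] (n - c)"
    using r \<open>c < n\<close> r_pow by (intro inv_equality) (simp_all add: nat_pow_mult)
  ultimately have s_rc_s: "s \<otimes> r [^] c \<otimes> s = r [^] (n - c)"
    using involution_conj_pow[OF s r s_s, of c] r by (simp add: nat_pow_inv)
  have "s \<otimes> r [^] c = s \<otimes> r [^] c \<otimes> s \<otimes> s"
    using r s s_s by (simp add: m_assoc)
  with s_rc_s have s_rc: "s \<otimes> r [^] c = r [^] (n - c) \<otimes> s"
    by simp
  from s_rc_s have s_rc_s: "s \<otimes> (r [^] c \<otimes> s) = r [^] (n - c)"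
    using r s by (simp add: m_assoc)
  have "r [^] ((a + c) mod n) = r [^] a \<otimes> r [^] c"
    using r by (simp add: r_pow_mod[symmetric] nat_pow_mult)
  moreover have "r [^] ((a + n - c) mod n) = r [^] a \<otimes> r [^] (n - c)"
    using r \<open>c < n\<close> by (simp add: r_pow_mod[symmetric] nat_pow_mult)
  ultimately show "dihedral_map G r s (x \<otimes>\<^bsub>dihedral_group n\<^esub> y)
                     = dihedral_map G r s x \<otimes> dihedral_map G r s y"
    using r s s_rc_s s_rc
    by (cases b; cases d) (simp_all add: xy dihedral_map_def dihedral_group_mult m_assoc)
qed

locale dihedral_qz_cocycle = qz_cocycle "dihedral_group n" t
  for n :: nat and t :: "nat \<times> bool \<Rightarrow> nat \<times> bool \<Rightarrow> rat" +
  assumes even_n: "even n" and two_le_n: "2 \<le> n"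
begin

lemma rotation_pow: "(Suc 0, False) [^]\<^bsub>dihedral_group n\<^esub> (k::nat) = (k mod n, False)"
  using two_le_n by (simp add: dihedral_group_rotation_pow)

text \<open>By the hypothesis on t, R^(n/2) commutes with the lift (0, r^c s) of r^c s, hence with
  the other lift R^c S of r^c s, which differs from it by a central factor, hence with S.\<close>
lemma central_rotation_lift_commute:
  assumes R: "R \<in> carrier E" "snd R = (1, False)"
    and S: "S \<in> carrier E" "snd S = (0, True)"
    and "c < n" and comm: "t (n div 2, False) (c, True) - t (c, True) (n div 2, False) \<in> \<int>"
  shows "R [^]\<^bsub>E\<^esub> (n div 2) \<otimes>\<^bsub>E\<^esub> S = S \<otimes>\<^bsub>E\<^esub> R [^]\<^bsub>E\<^esub> (n div 2)"
proof -
  define U where "U = R [^]\<^bsub>E\<^esub> (n div 2)"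
  define B where "B = (0::rat, (c, True))"
  define W where "W = R [^]\<^bsub>E\<^esub> c \<otimes>\<^bsub>E\<^esub> S"
  have U: "U \<in> carrier E" "snd U = (n div 2, False)"
    using R two_le_n by (simp_all add: U_def snd_pow_E rotation_pow)
  have B: "B \<in> carrier E"
    using \<open>c < n\<close> by (simp add: B_def carrier_E carrier_dihedral_group)
  have W: "W \<in> carrier E"
    using R S by (simp add: W_def)
  have "U \<otimes>\<^bsub>E\<^esub> B = B \<otimes>\<^bsub>E\<^esub> U"
  proof (rule mult_E_commute[OF U(1) B])
    have "c + n - n div 2 = n div 2 + c"
      using even_n by (auto elim!: evenE)
    then show "snd U \<otimes>\<^bsub>dihedral_group n\<^esub> snd B = snd B \<otimes>\<^bsub>dihedral_group n\<^esub> snd U"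
      by (simp add: U B_def dihedral_group_mult)
    show "t (snd U) (snd B) - t (snd B) (snd U) \<in> \<int>"
      using comm by (simp add: U B_def)
  qed
  moreover have "W = B \<otimes>\<^bsub>E\<^esub> central (fst W - fst B)"
    using W B R S \<open>c < n\<close>
    by (intro eq_mult_central_if_snd_eq) (simp_all add: W_def B_def snd_mult_E snd_pow_E rotation_pow dihedral_group_mult)
  ultimately have "U \<otimes>\<^bsub>E\<^esub> W = W \<otimes>\<^bsub>E\<^esub> U"
    using U B central_commute[OF U(1)] by (metis E.m_assoc central_closed)
  moreover have "U \<otimes>\<^bsub>E\<^esub> R [^]\<^bsub>E\<^esub> c = R [^]\<^bsub>E\<^esub> c \<otimes>\<^bsub>E\<^esub> U"
    using R by (simp add: U_def E.nat_pow_mult add.commute)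
  ultimately have "R [^]\<^bsub>E\<^esub> c \<otimes>\<^bsub>E\<^esub> (U \<otimes>\<^bsub>E\<^esub> S) = R [^]\<^bsub>E\<^esub> c \<otimes>\<^bsub>E\<^esub> (S \<otimes>\<^bsub>E\<^esub> U)"
    using R S U by (simp add: W_def flip: E.m_assoc)
  then show ?thesis
    using R S U by (simp add: U_def)
qed

text \<open>Take lifts R1 of r and S of s with R1^n = S^2 = 1 and write S R1 S R1 = \<gamma>; as
  (n/2) \<gamma> \<in> Z, the lift R = R1 (-\<gamma>/2) satisfies all defining relations of D_n.\<close>
lemma dihedral_relations_lift:
  assumes "c < n" and "t (n div 2, False) (c, True) - t (c, True) (n div 2, False) \<in> \<int>"
  obtains R S where "R \<in> carrier E" "S \<in> carrier E" "snd R = (1, False)" "snd S = (0, True)"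
    "R [^]\<^bsub>E\<^esub> n = \<one>\<^bsub>E\<^esub>" "S \<otimes>\<^bsub>E\<^esub> S = \<one>\<^bsub>E\<^esub>" "S \<otimes>\<^bsub>E\<^esub> R \<otimes>\<^bsub>E\<^esub> S \<otimes>\<^bsub>E\<^esub> R = \<one>\<^bsub>E\<^esub>"
proof -
  have "(1, False) \<in> carrier (dihedral_group n)" "(1, False) [^]\<^bsub>dihedral_group n\<^esub> n = \<one>\<^bsub>dihedral_group n\<^esub>"
    using two_le_n by (simp_all add: carrier_dihedral_group rotation_pow one_dihedral_group)
  moreover have "0 < n"
    using two_le_n by simp
  ultimately obtain R1 where R1: "R1 \<in> carrier E" "snd R1 = (1, False)" "R1 [^]\<^bsub>E\<^esub> n = \<one>\<^bsub>E\<^esub>"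
    by (rule lift_pow_eq_one)
  have "(0, True) \<in> carrier (dihedral_group n)" "(0, True) [^]\<^bsub>dihedral_group n\<^esub> (2::nat) = \<one>\<^bsub>dihedral_group n\<^esub>"
    using two_le_n by (simp_all add: carrier_dihedral_group numeral_2_eq_2 dihedral_group_mult one_dihedral_group)
  then obtain S where S: "S \<in> carrier E" "snd S = (0, True)" "S [^]\<^bsub>E\<^esub> (2::nat) = \<one>\<^bsub>E\<^esub>"
    by (rule lift_pow_eq_one) simp
  have SS: "S \<otimes>\<^bsub>E\<^esub> S = \<one>\<^bsub>E\<^esub>"
    using S by (simp add: numeral_2_eq_2)
  define m where "m = n div 2"
  have n_eq: "n = m + m"
    using even_n by (auto simp: m_def elim!: evenE)
  define \<gamma> where "\<gamma> = fst (S \<otimes>\<^bsub>E\<^esub> R1 \<otimes>\<^bsub>E\<^esub> S \<otimes>\<^bsub>E\<^esub> R1)"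
  have "(n + n - Suc 0) mod n = n - 1"
    using two_le_n by (simp add: mod_if)
  then have SR1SR1: "S \<otimes>\<^bsub>E\<^esub> R1 \<otimes>\<^bsub>E\<^esub> S \<otimes>\<^bsub>E\<^esub> R1 = central \<gamma>"
    unfolding \<gamma>_def using S R1 two_le_n
    by (intro eq_central_if_snd_eq_one) (simp_all add: snd_mult_E dihedral_group_mult one_dihedral_group)
  have m\<gamma>: "of_nat m * \<gamma> \<in> \<int>"
  proof (rule half_pow_commute_obstruction[OF R1(1) _ S(1) SS SR1SR1])
    show "R1 [^]\<^bsub>E\<^esub> (m + m) = \<one>\<^bsub>E\<^esub>"
      using R1(3) by (simp flip: n_eq)
    show "R1 [^]\<^bsub>E\<^esub> m \<otimes>\<^bsub>E\<^esub> S = S \<otimes>\<^bsub>E\<^esub> R1 [^]\<^bsub>E\<^esub> m"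
      using central_rotation_lift_commute[OF R1(1,2) S(1,2) assms] by (simp add: m_def)
  qed
  define R where "R = R1 \<otimes>\<^bsub>E\<^esub> central (- \<gamma> / 2)"
  show thesis
  proof
    show "R \<in> carrier E" "S \<in> carrier E" "snd R = (1, False)" "snd S = (0, True)" "S \<otimes>\<^bsub>E\<^esub> S = \<one>\<^bsub>E\<^esub>"
      using R1 S SS by (simp_all add: R_def snd_mult_central)
    have n_\<gamma>: "of_nat n * (- \<gamma> / 2) = - (of_nat m * \<gamma>)"
      using n_eq by simp
    have "R [^]\<^bsub>E\<^esub> n = central (- (of_nat m * \<gamma>))"
      unfolding R_def pow_mult_central[OF R1(1)] R1(3) n_\<gamma> by simp
    then show "R [^]\<^bsub>E\<^esub> n = \<one>\<^bsub>E\<^esub>"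
      using m\<gamma> by (simp add: central_eq_one_iff)
    have "S \<otimes>\<^bsub>E\<^esub> R = (S \<otimes>\<^bsub>E\<^esub> R1) \<otimes>\<^bsub>E\<^esub> central (- \<gamma> / 2)"
      using mult_central_mult_central[OF S(1) R1(1), of 0 "- \<gamma> / 2"] S(1) by (simp add: R_def)
    then have "S \<otimes>\<^bsub>E\<^esub> R \<otimes>\<^bsub>E\<^esub> S = (S \<otimes>\<^bsub>E\<^esub> R1 \<otimes>\<^bsub>E\<^esub> S) \<otimes>\<^bsub>E\<^esub> central (- \<gamma> / 2)"
      using mult_central_mult_central[of "S \<otimes>\<^bsub>E\<^esub> R1" S "- \<gamma> / 2" 0] S(1) R1(1) by simp
    then have "S \<otimes>\<^bsub>E\<^esub> R \<otimes>\<^bsub>E\<^esub> S \<otimes>\<^bsub>E\<^esub> R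
                 = (S \<otimes>\<^bsub>E\<^esub> R1 \<otimes>\<^bsub>E\<^esub> S \<otimes>\<^bsub>E\<^esub> R1) \<otimes>\<^bsub>E\<^esub> central (- \<gamma> / 2 + - \<gamma> / 2)"
      using S(1) R1(1) by (simp add: R_def mult_central_mult_central)
    then show "S \<otimes>\<^bsub>E\<^esub> R \<otimes>\<^bsub>E\<^esub> S \<otimes>\<^bsub>E\<^esub> R = \<one>\<^bsub>E\<^esub>"
      by (simp add: SR1SR1 central_mult central_eq_one_iff)
  qed
qed

theorem dihedral_qz_coboundary:
  assumes "c < n" and "t (n div 2, False) (c, True) - t (c, True) (n div 2, False) \<in> \<int>"
  shows "qz_coboundary (dihedral_group n) t"
proof -
  obtain R S where R: "R \<in> carrier E" "snd R = (1, False)" "R [^]\<^bsub>E\<^esub> n = \<one>\<^bsub>E\<^esub>"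
    and S: "S \<in> carrier E" "snd S = (0, True)" "S \<otimes>\<^bsub>E\<^esub> S = \<one>\<^bsub>E\<^esub>"
    and SRSR: "S \<otimes>\<^bsub>E\<^esub> R \<otimes>\<^bsub>E\<^esub> S \<otimes>\<^bsub>E\<^esub> R = \<one>\<^bsub>E\<^esub>"
    using dihedral_relations_lift[OF assms] by metis
  show ?thesis
  proof (rule qz_coboundary_if_hom_section)
    show "dihedral_map E R S \<in> hom (dihedral_group n) E"
      by (intro E.dihedral_map_hom R S SRSR)
    show "snd (dihedral_map E R S x) = x" if "x \<in> carrier (dihedral_group n)" for x
      using that R S
      by (cases x) (auto simp: dihedral_map_def carrier_dihedral_group snd_mult_E snd_pow_E
                               rotation_pow dihedral_group_mult)
  qed
qed

end

lemma qz_cocycle_if_integral_cobdry: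
  fixes G (structure) and \<theta> :: "'a list \<Rightarrow> rat"
  assumes "group G"
    and cobdry_\<theta>: "\<And>x y z. x \<in> carrier G \<Longrightarrow> y \<in> carrier G \<Longrightarrow> z \<in> carrier G \<Longrightarrow>
                      \<theta> [y, z] - \<theta> [x \<otimes> y, z] + \<theta> [x, y \<otimes> z] - \<theta> [x, y] = of_int (\<phi> [x, y, z])"
  shows "qz_cocycle G (\<lambda>x y. \<theta> [x, y] - \<theta> [\<one>, \<one>])"
proof (rule qz_cocycle.intro[OF assms(1)], unfold_locales)
  fix x y z assume "x \<in> carrier G" "y \<in> carrier G" "z \<in> carrier G"
  from cobdry_\<theta>[OF this] have "\<theta> [x, y] - \<theta> [\<one>, \<one>] + (\<theta> [x \<otimes> y, z] - \<theta> [\<one>, \<one>])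
      - (\<theta> [y, z] - \<theta> [\<one>, \<one>]) - (\<theta> [x, y \<otimes> z] - \<theta> [\<one>, \<one>]) = of_int (- \<phi> [x, y, z])"
    by linarith
  then show "\<theta> [x, y] - \<theta> [\<one>, \<one>] + (\<theta> [x \<otimes> y, z] - \<theta> [\<one>, \<one>])
      - (\<theta> [y, z] - \<theta> [\<one>, \<one>]) - (\<theta> [x, y \<otimes> z] - \<theta> [\<one>, \<one>]) \<in> \<int>"
    by (simp only: Ints_of_int)
qed simp

theorem dihedral_is_coboundary_if_restriction:
  assumes "even n" "2 \<le> n" "subgroup H (dihedral_group n)"
    and "(n div 2, False) \<in> H" "(c, True) \<in> H"
    and "cocycle (dihedral_group n) 3 \<phi>"
    and "is_coboundary ((dihedral_group n)\<lparr>carrier := H\<rparr>) 2 \<phi>"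
  shows "is_coboundary (dihedral_group n) 2 \<phi>"
proof -
  let ?D = "dihedral_group n" and ?K = "(dihedral_group n)\<lparr>carrier := H\<rparr>"
  let ?\<theta> = "avg_cochain ?D \<phi>"
  interpret D: group ?D
    using assms(2) by (simp add: group_dihedral_group)
  interpret H: subgroup H ?D by fact
  have cobdry_\<theta>: "?\<theta> [y, z] - ?\<theta> [x \<otimes>\<^bsub>?D\<^esub> y, z] + ?\<theta> [x, y \<otimes>\<^bsub>?D\<^esub> z] - ?\<theta> [x, y]
                    = of_int (\<phi> [x, y, z])"
    if "x \<in> carrier ?D" "y \<in> carrier ?D" "z \<in> carrier ?D" for x y z
    using cobdry_avg_cochain[OF D.is_group _ assms(6) that] by (simp add: carrier_dihedral_group)
  interpret dihedral_qz_cocycle n "\<lambda>x y. ?\<theta> [x, y] - ?\<theta> [\<one>\<^bsub>?D\<^esub>, \<one>\<^bsub>?D\<^esub>]"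
    using qz_cocycle_if_integral_cobdry[OF D.is_group cobdry_\<theta>] assms(1,2)
    by (simp add: dihedral_qz_cocycle_def dihedral_qz_cocycle_axioms_def)
  have "c < n"
    using assms(5) H.subset by (auto simp: carrier_dihedral_group)
  have K_cobdry_\<theta>: "?\<theta> [y, z] - ?\<theta> [x \<otimes>\<^bsub>?K\<^esub> y, z] + ?\<theta> [x, y \<otimes>\<^bsub>?K\<^esub> z] - ?\<theta> [x, y]
                      = of_int (\<phi> [x, y, z])"
    if "x \<in> carrier ?K" "y \<in> carrier ?K" "z \<in> carrier ?K" for x y z
    using that H.subset by (simp add: cobdry_\<theta> subsetD)
  have "finite (carrier ?K)"
    using H.subset by (auto intro: finite_subset simp: carrier_dihedral_group)
  moreover have "(n div 2, False) \<otimes>\<^bsub>?D\<^esub> (c, True) = (c, True) \<otimes>\<^bsub>?D\<^esub> (n div 2, False)"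
    using assms(1) by (auto simp: dihedral_group_mult elim!: evenE)
  ultimately have "?\<theta> [(n div 2, False), (c, True)] - ?\<theta> [(c, True), (n div 2, False)] \<in> \<int>"
    using rat_cobdry_commutator_Ints[OF H.subgroup_is_group[OF D.is_group] _ K_cobdry_\<theta> assms(7)] assms(4,5)
    by simp
  then have "qz_coboundary ?D (\<lambda>x y. ?\<theta> [x, y] - ?\<theta> [\<one>\<^bsub>?D\<^esub>, \<one>\<^bsub>?D\<^esub>])"
    using \<open>c < n\<close> by (intro dihedral_qz_coboundary) simp_all
  then show ?thesis
    using D.is_monoid cobdry_\<theta> by (rule is_coboundary_if_qz_coboundary[rotated 2])
qed

lemma (in group) square_mem_index_two_subgroup:
  assumes H: "subgroup H G" and index: "card (rcosets H) = 2" and x: "x \<in> carrier G"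
  shows "x \<otimes> x \<in> H"
proof (rule ccontr)
  assume "x \<otimes> x \<notin> H"
  then have "x \<notin> H"
    using subgroup.m_closed[OF H] by blast
  have coset_ne: "H \<noteq> H #> y" if "y \<in> carrier G" "y \<notin> H" for y
    using rcos_self[OF that(1) H] that(2) by blast
  have "H #> x \<noteq> H #> (x \<otimes> x)"
  proof
    assume "H #> x = H #> (x \<otimes> x)"
    then have "x \<otimes> x \<in> H #> x"
      using repr_independenceD[OF H] x by simp
    then obtain h where "h \<in> H" "x \<otimes> x = h \<otimes> x"
      by (auto simp: r_coset_def)
    then have "x = h"
      using x subgroup.subset[OF H] by (metis r_cancel subsetD)
    with \<open>x \<notin> H\<close> \<open>h \<in> H\<close> show False by simp
  qed
  then have "card {H, H #> x, H #> (x \<otimes> x)} = 3"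
    using coset_ne x \<open>x \<notin> H\<close> \<open>x \<otimes> x \<notin> H\<close> by (simp add: card_insert_if)
  moreover have "{H, H #> x, H #> (x \<otimes> x)} \<subseteq> rcosets H"
    using rcosetsI[OF subgroup.subset[OF H] one_closed] rcosetsI[OF subgroup.subset[OF H] x]
      rcosetsI[OF subgroup.subset[OF H] m_closed[OF x x]] coset_mult_one[OF subgroup.subset[OF H]]
    by simp
  moreover have "finite (rcosets H)"
    using index card.infinite by fastforce
  ultimately have "3 \<le> card (rcosets H)"
    by (metis card_mono)
  with index show False
    by simp
qed

lemma dihedral_central_rotation_mem_index_two_subgroup:
  assumes "4 dvd n" "n > 0" "subgroup H (dihedral_group n)"
    and "card (rcosets\<^bsub>dihedral_group n\<^esub> H) = 2"
  shows "(n div 2, False) \<in> H"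
proof -
  let ?D = "dihedral_group n"
  interpret D: group ?D
    using assms(2) by (simp add: group_dihedral_group)
  have "n > 1"
    using assms(1,2) by (auto elim!: dvdE)
  have "(1, False) \<in> carrier ?D"
    using \<open>n > 1\<close> by (simp add: carrier_dihedral_group)
  then have "(1, False) [^]\<^bsub>?D\<^esub> (2::nat) \<in> H"
    using D.square_mem_index_two_subgroup[OF assms(3,4)] by (simp add: numeral_2_eq_2)
  then have "((1, False) [^]\<^bsub>?D\<^esub> (2::nat)) [^]\<^bsub>?D\<^esub> int (n div 4) \<in> H"
    by (rule D.subgroup_int_pow_closed[OF assms(3)])
  moreover have "2 * (n div 4) = n div 2"
    using assms(1) by (auto elim!: dvdE)
  then have "((1, False) [^]\<^bsub>?D\<^esub> (2::nat)) [^]\<^bsub>?D\<^esub> int (n div 4) = (1, False) [^]\<^bsub>?D\<^esub> (n div 2)"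
    using \<open>(1, False) \<in> carrier ?D\<close> by (simp only: int_pow_int D.nat_pow_pow)
  ultimately show ?thesis
    using \<open>n > 1\<close> by (simp add: dihedral_group_rotation_pow)
qed

lemma dihedral_group_rotation_square_eq_one:
  assumes "a < n" "(a, False) \<otimes>\<^bsub>dihedral_group n\<^esub> (a, False) = \<one>\<^bsub>dihedral_group n\<^esub>"
  shows "a = 0 \<or> a = n div 2"
  using assms by (auto simp: dihedral_group_mult one_dihedral_group mod_if split: if_splits)

text \<open>D_m with m \<ge> 2 has the three involutions 1, s, r s, whereas a subgroup of rotations of D_n
  has at most the two elements 1 and r^(n/2) squaring to 1.\<close>
lemma dihedral_subgroup_has_reflection:
  assumes "n > 0" "subgroup H (dihedral_group n)"
    and "(dihedral_group n)\<lparr>carrier := H\<rparr> \<cong> dihedral_group m" "2 \<le> m"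
  shows "\<exists>c<n. (c, True) \<in> H"
proof (rule ccontr)
  let ?D = "dihedral_group n" and ?K = "(dihedral_group n)\<lparr>carrier := H\<rparr>"
  assume no_reflection: "\<not> (\<exists>c<n. (c, True) \<in> H)"
  interpret D: group ?D
    using assms(1) by (simp add: group_dihedral_group)
  interpret K: group ?K
    by (rule subgroup.subgroup_is_group[OF assms(2) D.is_group])
  obtain \<psi> where \<psi>: "\<psi> \<in> iso (dihedral_group m) ?K"
    using K.iso_sym[OF assms(3)] unfolding is_iso_def by blast
  have \<psi>_hom: "\<psi> \<in> hom (dihedral_group m) ?K" and "inj_on \<psi> (carrier (dihedral_group m))"
    and \<psi>_into: "\<psi> ` carrier (dihedral_group m) \<subseteq> H"
    using \<psi> by (auto simp: iso_def bij_betw_def)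
  define A :: "(nat \<times> bool) set" where "A = {(0, False), (0, True), (1, True)}"
  have A: "A \<subseteq> carrier (dihedral_group m)"
    using assms(4) by (auto simp: A_def carrier_dihedral_group)
  have "\<psi> ` A \<subseteq> {(0, False), (n div 2, False)}"
  proof
    fix y assume "y \<in> \<psi> ` A"
    then obtain x where x: "x \<in> A" "y = \<psi> x"
      by blast
    have "x \<otimes>\<^bsub>dihedral_group m\<^esub> x = \<one>\<^bsub>dihedral_group m\<^esub>"
      using x(1) assms(4) by (auto simp: A_def dihedral_group_mult one_dihedral_group)
    moreover have "\<psi> (x \<otimes>\<^bsub>dihedral_group m\<^esub> x) = y \<otimes>\<^bsub>?D\<^esub> y"
      using hom_mult[OF \<psi>_hom, of x x] x A by (simp add: subsetD)
    ultimately have "y \<otimes>\<^bsub>?D\<^esub> y = \<one>\<^bsub>?D\<^esub>"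
      using hom_one[OF \<psi>_hom group_dihedral_group K.is_group] assms(4) by simp
    moreover have "y \<in> H"
      using x A \<psi>_into by blast
    then obtain a where "y = (a, False)" "a < n"
      using no_reflection subgroup.subset[OF assms(2)] by (cases y) (force simp: carrier_dihedral_group)
    ultimately show "y \<in> {(0, False), (n div 2, False)}"
      using dihedral_group_rotation_square_eq_one by auto
  qed
  then have "card (\<psi> ` A) \<le> card {(0::nat, False), (n div 2, False)}"
    by (rule card_mono[rotated]) simp
  also have "\<dots> \<le> 2"
    by (simp add: card_insert_if)
  finally have "card (\<psi> ` A) \<le> 2" .
  moreover have "card (\<psi> ` A) = 3"
    using inj_on_subset[OF \<open>inj_on \<psi> _\<close> A] by (simp add: card_image A_def)
  ultimately show False
    by simp
qed

theorem lemma2p2: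
  fixes n :: nat and H :: "(nat \<times> bool) set"
  assumes "even n" and "n > 0"
    and "subgroup H (dihedral_group n)"
    and "\<exists>m>0. (dihedral_group n)\<lparr>carrier := H\<rparr> \<cong> dihedral_group m"
    and "card (rcosets\<^bsub>dihedral_group n\<^esub> H) = 2"
    and "4 dvd card H"
  shows "\<forall>f g. cocycle (dihedral_group n) 3 f \<and> cocycle (dihedral_group n) 3 g
           \<and> cohomologous ((dihedral_group n)\<lparr>carrier := H\<rparr>) 2 f g
           \<longrightarrow> cohomologous (dihedral_group n) 2 f g"
proof (intro allI impI)
  fix f g
  assume fg: "cocycle (dihedral_group n) 3 f \<and> cocycle (dihedral_group n) 3 g
                \<and> cohomologous ((dihedral_group n)\<lparr>carrier := H\<rparr>) 2 f g"
  have "card H = n"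
    using group.lagrange[OF group_dihedral_group[OF assms(2)] assms(3)] assms(5)
    by (simp add: order_def carrier_dihedral_group)
  with assms(2,6) have "4 dvd n" "4 \<le> n"
    by (auto elim!: dvdE)
  obtain m where iso: "(dihedral_group n)\<lparr>carrier := H\<rparr> \<cong> dihedral_group m"
    using assms(4) by blast
  then have "2 * m = n"
    using iso_same_card[OF iso] \<open>card H = n\<close> by (simp add: carrier_dihedral_group card_cartesian_product)
  then obtain c where "(c, True) \<in> H"
    using dihedral_subgroup_has_reflection[OF assms(2,3) iso] \<open>4 \<le> n\<close> by auto
  moreover have "(n div 2, False) \<in> H"
    using dihedral_central_rotation_mem_index_two_subgroup[OF \<open>4 dvd n\<close> assms(2,3,5)] .
  ultimately show "cohomologous (dihedral_group n) 2 f g"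
    unfolding cohomologous_def
    using fg \<open>4 \<le> n\<close>
    by (intro dihedral_is_coboundary_if_restriction[OF assms(1) _ assms(3)])
       (simp_all add: cocycle_diff cohomologous_def)
qed

end
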